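(* Let $D$ be an $m$-Dyck path of order $\ell$. The frieze pattern $F_{\mathsf{rtn}(D)}$ satisfies \[ F_{\mathsf{rtn}(D)}(i-1,i+1) = (\text{up}_D(i) + \text{bal}_D(i)+1) \lambda_{m+2} \] for all $0 \leq i \leq m\ell + 1$.
   Context: An $m$-Dyck path of order $\ell$ is a lattice path of up steps $(0,1)$ and right steps $(1,0)$ from $(0,0)$ to $(m\ell,\ell)$ staying above the line $y = x/m$. A lattice point of the path is a corner if it is incident to both an up step and a right step; otherwise it is a non-corner. The balance lines of $D$ form a multiset of $\ell-1$ lines of slope $1/m$, one through the lowest point of each up step except the first up step. A balance line starting at $(i,i')$ whose first intersection with a non-corner point of $D$ is at $(j,j')$ is labeled $(i,j+1)$. The map $\mathsf{rtn}$ sends $D$ to the $(m+2)$-angulation of the polygon $P_{m\ell+2}$ (vertices $v_0,\ldots,v_{m\ell+1}$ labeled clockwise) consisting of the diagonals $(v_i,v_j)$ for all labels $(i,j)$ of balance lines of $D$. For $0 \le i \le m\ell+1$, $\text{up}_D(i)$ is the number of up steps of the form $(i,j)-(i,j+1)$ with $j>0$ in $D$, and $\text{bal}_D(i)$ is the number of balance lines whose first intersection with a non-corner point of $D$ is at a point $(i-1,j)$. $\lambda_p = 2\cos(\pi/p)$. For a dissection $T$ of a polygon $P_N$, $F_T$ is the (finite) frieze pattern — a function $F$ on $\{(i,j): 0 \le j-i \le N\}$ with $F(i,i)=F(i,i+N)=0$, $F(i,i+1)=F(i,i+N-1)=1$, and $F(i-1,j)F(i,j+1)-F(i,j)F(i+1,j+1)=1$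 — determined by the quiddity row $F_T(i-1,i+1)=\sum_{p\ge 3}\mu_p(\overline{i})\lambda_p$, where $\mu_p(\overline{i})$ is the number of $p$-gons of $T$ incident to the vertex $v_{i \bmod N}$. *)

theory Defs
  imports Complex_Main
begin

text \<open>A lattice path is a list of steps: True = up step (0,1), False = right step (1,0).
  The k-th lattice point (0 \<le> k \<le> length D) is the point reached after the first k steps.\<close>

definition xc :: "bool list \<Rightarrow> nat \<Rightarrow> int" where
  "xc D k = int (length (filter Not (take k D)))"

definition yc :: "bool list \<Rightarrow> nat \<Rightarrow> int" where
  "yc D k = int (length (filter id (take k D)))"

definition dyck_path :: "nat \<Rightarrow> nat \<Rightarrow> bool list \<Rightarrow> bool" where
  "dyck_path m l D \<longleftrightarrow> length (filter id D) = l \<and> length (filter Not D) = m * l \<and>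
     (\<forall>k \<le> length D. xc D k \<le> int m * yc D k)"

text \<open>Lattice point k is a corner iff it is incident to both an up step and a right step.\<close>
definition corner :: "bool list \<Rightarrow> nat \<Rightarrow> bool" where
  "corner D k \<longleftrightarrow> 0 < k \<and> k < length D \<and> D ! (k - 1) \<noteq> D ! k"

definition first_up :: "bool list \<Rightarrow> nat" where
  "first_up D = (LEAST k. k < length D \<and> D ! k)"

text \<open>Up steps (given by their step index s) carrying a balance line: all up steps except the
  first one. The balance line goes through the lowest point of the step, i.e. lattice point s.\<close>
definition bal_steps :: "bool list \<Rightarrow> nat set" where
  "bal_steps D = {s. s < length D \<and> D ! s \<and> s \<noteq> first_up D}"

text \<open>Index of the first (going along the line, away from its start) lattice point of D lying on
  the balance line of slope 1/m through lattice point s that is a non-corner.\<close>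
definition bal_hit :: "nat \<Rightarrow> bool list \<Rightarrow> nat \<Rightarrow> nat" where
  "bal_hit m D s = (LEAST k. s < k \<and> k \<le> length D \<and> \<not> corner D k \<and>
      int m * (yc D k - yc D s) = xc D k - xc D s)"

text \<open>Label (i, j+1) of the balance line starting at (i,i') and first hitting a non-corner at (j,j').\<close>
definition bal_label :: "nat \<Rightarrow> bool list \<Rightarrow> nat \<Rightarrow> int \<times> int" where
  "bal_label m D s = (xc D s, xc D (bal_hit m D s) + 1)"

definition rtn :: "nat \<Rightarrow> bool list \<Rightarrow> (int \<times> int) set" where
  "rtn m D = bal_label m D ` bal_steps D"

definition up_D :: "bool list \<Rightarrow> int \<Rightarrow> nat" where
  "up_D D i = card {k. k < length D \<and> D ! k \<and> xc D k = i \<and> yc D k > 0}"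

text \<open>Balance lines counted with multiplicity (one per non-first up step).\<close>
definition bal_D :: "nat \<Rightarrow> bool list \<Rightarrow> int \<Rightarrow> nat" where
  "bal_D m D i = card {s \<in> bal_steps D. xc D (bal_hit m D s) = i - 1}"

text \<open>Vertices of P_N are 0..N-1 (v_0..v_{N-1}, clockwise). A diagonal (a,b) separates u and w
  if one of them lies strictly between a and b and the other strictly outside.\<close>
definition separates :: "int \<times> int \<Rightarrow> int \<Rightarrow> int \<Rightarrow> bool" where
  "separates d u w \<longleftrightarrow> (let lo = min (fst d) (snd d); hi = max (fst d) (snd d) in
     (lo < u \<and> u < hi \<and> (w < lo \<or> hi < w)) \<or> (lo < w \<and> w < hi \<and> (u < lo \<or> hi < u)))"

definition unsep :: "(int \<times> int) set \<Rightarrow> int set \<Rightarrow> bool" where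
  "unsep T S \<longleftrightarrow> (\<forall>d\<in>T. \<forall>u\<in>S. \<forall>w\<in>S. \<not> separates d u w)"

text \<open>The pieces (polygons) of the dissection T, given by their vertex sets: the maximal sets of
  vertices not separated by any diagonal of T.\<close>
definition cells :: "nat \<Rightarrow> (int \<times> int) set \<Rightarrow> int set set" where
  "cells N T = {S. S \<subseteq> {0..<int N} \<and> unsep T S \<and>
       (\<forall>S'. S \<subseteq> S' \<and> S' \<subseteq> {0..<int N} \<and> unsep T S' \<longrightarrow> S' = S)}"

definition mu :: "nat \<Rightarrow> (int \<times> int) set \<Rightarrow> nat \<Rightarrow> int \<Rightarrow> nat" where
  "mu N T p v = card {C \<in> cells N T. card C = p \<and> v \<in> C}"

definition lam :: "nat \<Rightarrow> real" where
  "lam p = 2 * cos (pi / real p)"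

text \<open>Quiddity entry c_i = F_T(i-1,i+1) = sum over p \<ge> 3 of mu_p(i mod N) lambda_p
  (pieces have at most N vertices).\<close>
definition quiddity :: "nat \<Rightarrow> (int \<times> int) set \<Rightarrow> int \<Rightarrow> real" where
  "quiddity N T i = (\<Sum>p\<in>{3..N}. real (mu N T p (i mod int N)) * lam p)"

text \<open>Frieze entries F(i, i+d) generated from the quiddity row by the recurrence
  F(i,i)=0, F(i,i+1)=1, F(i,j+1) = c_j F(i,j) - F(i,j-1).\<close>
fun frieze_aux :: "(int \<Rightarrow> real) \<Rightarrow> int \<Rightarrow> nat \<Rightarrow> real" where
  "frieze_aux c i 0 = 0"
| "frieze_aux c i (Suc 0) = 1"
| "frieze_aux c i (Suc (Suc d)) =
     c (i + int d + 1) * frieze_aux c i (Suc d) - frieze_aux c i d"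

definition frieze :: "nat \<Rightarrow> (int \<times> int) set \<Rightarrow> int \<Rightarrow> int \<Rightarrow> real" where
  "frieze N T i j = frieze_aux (quiddity N T) i (nat (j - i))"

end

theory Submission
  imports Defs
begin

text \<open>Deleting the last up step of \<open>D\<close> together with the \<open>m\<close> right
  steps following it leaves an \<open>m\<close>-Dyck path \<open>D'\<close> of order \<open>l - 1\<close>, and \<open>rtn D\<close> arises from
  \<open>rtn D'\<close> by gluing an \<open>(m+2)\<close>-gon onto the edge \<open>(X, X+1)\<close>, where \<open>X\<close> is the
  \<open>x\<close>-coordinate of the deleted up step: that step carries the new diagonal \<open>(X, X+m+1)\<close>, and every
  other balance line keeps its label up to the shift by \<open>m\<close> of the vertices beyond \<open>X\<close>.
  So \<open>rtn D\<close> is an \<open>(m+2)\<close>-angulation, and the number of its pieces at a vertex grows exactly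
  as \<open>up\<^sub>D + bal\<^sub>D + 1\<close> does: by one at \<open>X\<close> (the new up step) and at \<open>X+1\<close>, which is shifted to
  \<open>X+m+1\<close> (the end of the new balance line), while the new vertices in between lie in the new
  piece only. In an \<open>(m+2)\<close>-angulation the quiddity at a vertex is \<open>\<lambda>\<^sub>m\<^sub>+\<^sub>2\<close> times the number
  of pieces there.\<close>

section \<open>Gluing an ear onto a dissection\<close>

definition shift_after :: "int \<Rightarrow> nat \<Rightarrow> int \<Rightarrow> int" where
  "shift_after a m v = (if v \<le> a then v else v + int m)"

text \<open>Glue an \<open>(m+2)\<close>-gon with vertices \<open>a, \<dots>, a+m+1\<close> onto the edge \<open>(a, a+1)\<close> of a dissection;
  the old vertices after \<open>a\<close> move up by \<open>m\<close>.\<close>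
definition ear_extend :: "int \<Rightarrow> nat \<Rightarrow> (int \<times> int) set \<Rightarrow> (int \<times> int) set" where
  "ear_extend a m T =
     insert (a, a + int m + 1) (map_prod (shift_after a m) (shift_after a m) ` T)"

definition incidence :: "nat \<Rightarrow> (int \<times> int) set \<Rightarrow> int \<Rightarrow> nat" where
  "incidence N T v = card {C \<in> cells N T. v \<in> C}"

lemma strict_mono_shift_after: "strict_mono (shift_after a m)"
  by (auto simp: strict_mono_def shift_after_def)

lemma shift_after_less_iff [simp]: "shift_after a m u < shift_after a m w \<longleftrightarrow> u < w"
  by (rule strict_mono_less[OF strict_mono_shift_after])

lemma shift_after_le_iff [simp]: "shift_after a m u \<le> shift_after a m w \<longleftrightarrow> u \<le> w"
  by (rule strict_mono_less_eq[OF strict_mono_shift_after])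

lemma inj_shift_after: "inj (shift_after a m)"
  by (rule strict_mono_imp_inj_on[OF strict_mono_shift_after])

lemma shift_after_eq_iff [simp]: "shift_after a m u = shift_after a m w \<longleftrightarrow> u = w"
  by (rule inj_eq[OF inj_shift_after])

lemma shift_after_notin_ear_interior: "a < shift_after a m w \<Longrightarrow> a + int m + 1 \<le> shift_after a m w"
  by (auto simp: shift_after_def split: if_splits)

lemma image_vimage_shift_after:
  assumes "\<forall>v\<in>S. v \<le> a \<or> a + int m + 1 \<le> v"
  shows "shift_after a m ` (shift_after a m -` S) = S"
proof -
  have "v \<in> range (shift_after a m)" if "v \<in> S" for v
  proof (cases "v \<le> a")
    case True
    then show ?thesis by (metis rangeI shift_after_def)
  next
    case False
    with assms that have "v = shift_after a m (v - int m)" by (auto simp: shift_after_def)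
    then show ?thesis by blast
  qed
  then have "S \<subseteq> range (shift_after a m)" by blast
  then show ?thesis by (simp add: Int_absorb2)
qed

lemma shift_after_image_subset_iff:
  assumes "0 \<le> a" "a + 1 < int N"
  shows "shift_after a m ` S \<subseteq> {0..<int (N + m)} \<longleftrightarrow> S \<subseteq> {0..<int N}"
  using assms by (force simp: shift_after_def image_subset_iff)

lemma separates_shift_after:
  "separates (map_prod (shift_after a m) (shift_after a m) d)
      (shift_after a m u) (shift_after a m w) \<longleftrightarrow> separates d u w"
proof -
  have "min (shift_after a m (fst d)) (shift_after a m (snd d))
          = shift_after a m (min (fst d) (snd d))"
    "max (shift_after a m (fst d)) (shift_after a m (snd d))
          = shift_after a m (max (fst d) (snd d))"
    by (simp_all add: min_def max_def)
  then show ?thesis by (simp add: separates_def map_prod_def split_beta Let_def)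
qed

lemma unsep_ear_extend_image:
  "unsep (ear_extend a m T) (shift_after a m ` S) \<longleftrightarrow> unsep T S"
proof -
  have "\<not> separates (a, a + int m + 1) (shift_after a m u) (shift_after a m w)" for u w
    by (auto simp: separates_def shift_after_def Let_def)
  then show ?thesis by (auto simp: unsep_def ear_extend_def separates_shift_after)
qed

lemma unsep_ear_extend_ear: "unsep (ear_extend a m T) {a..a + int m + 1}"
  unfolding unsep_def ear_extend_def
proof (intro ballI)
  fix d u w
  assume d: "d \<in> insert (a, a + int m + 1) (map_prod (shift_after a m) (shift_after a m) ` T)"
    and uw: "u \<in> {a..a + int m + 1}" "w \<in> {a..a + int m + 1}"
  show "\<not> separates d u w"
  proof (cases "d = (a, a + int m + 1)")
    case True
    with uw show ?thesis by (auto simp: separates_def)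
  next
    case False
    with d obtain c e where d: "d = (shift_after a m c, shift_after a m e)" by auto
    with uw show ?thesis
      using shift_after_notin_ear_interior[of a m c] shift_after_notin_ear_interior[of a m e]
      by (auto simp: separates_def Let_def min_def max_def)
  qed
qed

lemma unsep_ear_cases:
  assumes "unsep (ear_extend a m T) S"
  shows "S \<subseteq> {a..a + int m + 1} \<or> (\<forall>v\<in>S. v \<le> a \<or> a + int m + 1 \<le> v)"
proof (rule ccontr)
  assume "\<not> ?thesis"
  then obtain u w where "u \<in> S" "u < a \<or> a + int m + 1 < u" and "w \<in> S" "a < w" "w < a + int m + 1"
    by (metis atLeastAtMost_iff not_le subsetI)
  then have "separates (a, a + int m + 1) w u" by (auto simp: separates_def)
  with assms \<open>u \<in> S\<close> \<open>w \<in> S\<close> show False by (auto simp: unsep_def ear_extend_def)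
qed

lemma cellsI:
  assumes "S \<subseteq> {0..<int N}" "unsep T S"
    and "\<And>S'. S \<subseteq> S' \<Longrightarrow> S' \<subseteq> {0..<int N} \<Longrightarrow> unsep T S' \<Longrightarrow> S' = S"
  shows "S \<in> cells N T"
  using assms by (auto simp: cells_def)

lemma cells_ear_extend_subset:
  assumes "0 \<le> a" "a + 1 < int N"
  shows "cells (N + m) (ear_extend a m T)
           \<subseteq> insert {a..a + int m + 1} ((`) (shift_after a m) ` cells N T)"
proof
  fix S assume "S \<in> cells (N + m) (ear_extend a m T)"
  then have S: "S \<subseteq> {0..<int (N + m)}" "unsep (ear_extend a m T) S"
    and S_max: "\<And>S'. S \<subseteq> S' \<Longrightarrow> S' \<subseteq> {0..<int (N + m)} \<Longrightarrow> unsep (ear_extend a m T) S'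
                  \<Longrightarrow> S' = S"
    by (auto simp: cells_def)
  from unsep_ear_cases[OF S(2)]
  show "S \<in> insert {a..a + int m + 1} ((`) (shift_after a m) ` cells N T)"
  proof
    assume "S \<subseteq> {a..a + int m + 1}"
    moreover have "{a..a + int m + 1} \<subseteq> {0..<int (N + m)}" using assms by auto
    ultimately have "{a..a + int m + 1} = S" using S_max unsep_ear_extend_ear by blast
    then show ?thesis by simp
  next
    assume "\<forall>v\<in>S. v \<le> a \<or> a + int m + 1 \<le> v"
    then have S_eq: "shift_after a m ` (shift_after a m -` S) = S"
      by (rule image_vimage_shift_after)
    note range_iff = shift_after_image_subset_iff[OF assms]
    have "shift_after a m -` S \<in> cells N T"
    proof (rule cellsI)
      show "shift_after a m -` S \<subseteq> {0..<int N}" using S(1) S_eq range_iff by metis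
      show "unsep T (shift_after a m -` S)" using S(2) S_eq unsep_ear_extend_image by metis
      fix S1 assume S1: "shift_after a m -` S \<subseteq> S1" "S1 \<subseteq> {0..<int N}" "unsep T S1"
      have "shift_after a m ` S1 = S"
      proof (rule S_max)
        show "S \<subseteq> shift_after a m ` S1" using S1(1) S_eq by (metis image_mono)
      qed (use S1 range_iff unsep_ear_extend_image in auto)
      then show "S1 = shift_after a m -` S" by (auto simp: inj_vimage_image_eq[OF inj_shift_after])
    qed
    then show ?thesis using S_eq by blast
  qed
qed

lemma ear_in_cells_ear_extend:
  assumes "1 \<le> m" "0 \<le> a" "a + 1 < int N"
  shows "{a..a + int m + 1} \<in> cells (N + m) (ear_extend a m T)"
proof (rule cellsI)
  show "{a..a + int m + 1} \<subseteq> {0..<int (N + m)}" using assms by auto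
  show "unsep (ear_extend a m T) {a..a + int m + 1}" by (rule unsep_ear_extend_ear)
  fix S'
  assume S': "{a..a + int m + 1} \<subseteq> S'" "S' \<subseteq> {0..<int (N + m)}" "unsep (ear_extend a m T) S'"
  then have "a + 1 \<in> S'" using assms by auto
  with unsep_ear_cases[of a m T S'] S' assms show "S' = {a..a + int m + 1}" by fastforce
qed

lemma shift_image_in_cells_ear_extend:
  assumes "0 \<le> a" "a + 1 < int N" and C: "C \<in> cells N T" "3 \<le> card C"
  shows "shift_after a m ` C \<in> cells (N + m) (ear_extend a m T)"
proof -
  from C have C_cell: "C \<subseteq> {0..<int N}" "unsep T C"
    and C_max: "\<And>S'. C \<subseteq> S' \<Longrightarrow> S' \<subseteq> {0..<int N} \<Longrightarrow> unsep T S' \<Longrightarrow> S' = C"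
    by (auto simp: cells_def)
  note range_iff = shift_after_image_subset_iff[OF assms(1,2)]
  show ?thesis
  proof (rule cellsI)
    show "shift_after a m ` C \<subseteq> {0..<int (N + m)}" using C_cell range_iff by metis
    show "unsep (ear_extend a m T) (shift_after a m ` C)"
      using C_cell unsep_ear_extend_image by metis
    fix S' assume S': "shift_after a m ` C \<subseteq> S'" "S' \<subseteq> {0..<int (N + m)}"
      "unsep (ear_extend a m T) S'"
    from unsep_ear_cases[OF S'(3)] show "S' = shift_after a m ` C"
    proof
      assume S'_ear: "S' \<subseteq> {a..a + int m + 1}"
      have "c \<in> {a, a + 1}" if "c \<in> C" for c
      proof -
        have "shift_after a m c \<in> {a..a + int m + 1}" using that S'(1) S'_ear by blast
        then show ?thesis by (cases "c \<le> a") (auto simp: shift_after_def)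
      qed
      then have "card C \<le> card {a, a + 1}" by (intro card_mono) auto
      then have "card C \<le> 2" by simp
      with C show ?thesis by simp
    next
      assume "\<forall>v\<in>S'. v \<le> a \<or> a + int m + 1 \<le> v"
      then have S'_eq: "shift_after a m ` (shift_after a m -` S') = S'"
        by (rule image_vimage_shift_after)
      have "shift_after a m -` S' = C"
      proof (rule C_max)
        show "C \<subseteq> shift_after a m -` S'" using S'(1) by auto
        show "shift_after a m -` S' \<subseteq> {0..<int N}" using S'(2) S'_eq range_iff by metis
        show "unsep T (shift_after a m -` S')" using S'(3) S'_eq unsep_ear_extend_image by metis
      qed
      with S'_eq show ?thesis by simp
    qed
  qed
qed

lemma cells_ear_extend:
  assumes "1 \<le> m" "0 \<le> a" "a + 1 < int N" and "\<forall>C\<in>cells N T. 3 \<le> card C"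
  shows "cells (N + m) (ear_extend a m T)
           = insert {a..a + int m + 1} ((`) (shift_after a m) ` cells N T)"
  using assms cells_ear_extend_subset ear_in_cells_ear_extend shift_image_in_cells_ear_extend
  by (intro equalityI) auto

lemma finite_cells: "finite (cells N T)"
  by (rule finite_subset[of _ "Pow {0..<int N}"]) (auto simp: cells_def)

lemma card_cells_ear_extend:
  assumes "1 \<le> m" "0 \<le> a" "a + 1 < int N" and "\<forall>C\<in>cells N T. card C = m + 2"
  shows "\<forall>C\<in>cells (N + m) (ear_extend a m T). card C = m + 2"
  using assms by (simp add: cells_ear_extend card_image inj_on_subset[OF inj_shift_after])

lemma incidence_ear_extend:
  assumes "1 \<le> m" "0 \<le> a" "a + 1 < int N" and "\<forall>C\<in>cells N T. 3 \<le> card C"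
  shows "incidence (N + m) (ear_extend a m T) v
           = (if v \<in> {a..a + int m + 1} then 1 else 0)
             + card {C \<in> cells N T. v \<in> shift_after a m ` C}"
proof -
  let ?E = "{a..a + int m + 1}" and ?shift = "(`) (shift_after a m)"
  have "?E \<notin> ?shift ` cells N T"
  proof
    assume "?E \<in> ?shift ` cells N T"
    moreover have "a + 1 \<in> ?E" using assms by simp
    ultimately obtain c where "a + 1 = shift_after a m c" by blast
    with assms show False by (auto simp: shift_after_def split: if_splits)
  qed
  then have E_notin: "?E \<notin> ?shift ` {C \<in> cells N T. v \<in> ?shift C}" by blast
  have "inj_on ?shift (cells N T)"
    by (rule inj_onI) (simp add: inj_image_eq_iff[OF inj_shift_after])
  then have card_shift:
    "card (?shift ` {C \<in> cells N T. v \<in> ?shift C}) = card {C \<in> cells N T. v \<in> ?shift C}"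
    by (simp add: card_image inj_on_subset)
  have "{C \<in> insert ?E (?shift ` cells N T). v \<in> C}
      = (if v \<in> ?E then insert ?E else id) (?shift ` {C \<in> cells N T. v \<in> ?shift C})"
    by auto
  with E_notin card_shift finite_cells[of N T] show ?thesis
    unfolding incidence_def cells_ear_extend[OF assms] by simp
qed

lemma incidence_ear_extend_shift:
  assumes "1 \<le> m" "0 \<le> a" "a + 1 < int N" and "\<forall>C\<in>cells N T. 3 \<le> card C"
  shows "incidence (N + m) (ear_extend a m T) (shift_after a m w)
           = (if w = a \<or> w = a + 1 then 1 else 0) + incidence N T w"
proof -
  have "shift_after a m w \<in> {a..a + int m + 1} \<longleftrightarrow> w = a \<or> w = a + 1"
    using assms by (auto simp: shift_after_def)
  with incidence_ear_extend[OF assms, of "shift_after a m w"] show ?thesis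
    by (simp add: incidence_def inj_image_mem_iff[OF inj_shift_after])
qed

lemma incidence_ear_extend_interior:
  assumes "1 \<le> m" "0 \<le> a" "a + 1 < int N" and "\<forall>C\<in>cells N T. 3 \<le> card C"
    and "a < v" "v < a + int m + 1"
  shows "incidence (N + m) (ear_extend a m T) v = 1"
proof -
  have "v \<notin> shift_after a m ` C" for C
    using assms(5,6) shift_after_notin_ear_interior[of a m] by (metis imageE not_less)
  then show ?thesis using assms by (simp add: incidence_ear_extend)
qed

lemma cells_empty: "cells N {} = {{0..<int N}}"
  by (auto simp: cells_def unsep_def)

lemma frieze_quiddity: "frieze N T (i - 1) (i + 1) = quiddity N T i"
proof -
  have "nat (i + 1 - (i - 1)) = Suc (Suc 0)" by simp
  then show ?thesis by (simp add: frieze_def numeral_2_eq_2)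
qed

lemma quiddity_uniform:
  assumes "\<forall>C\<in>cells N T. card C = p" and "3 \<le> p" "p \<le> N"
  shows "quiddity N T i = real (incidence N T (i mod int N)) * lam p"
proof -
  have "mu N T q (i mod int N) = (if q = p then incidence N T (i mod int N) else 0)" for q
  proof -
    have "{C \<in> cells N T. card C = q \<and> i mod int N \<in> C}
        = (if q = p then {C \<in> cells N T. i mod int N \<in> C} else {})"
      using assms(1) by auto
    then show ?thesis by (simp add: mu_def incidence_def)
  qed
  then have "quiddity N T i
      = (\<Sum>q\<in>{3..N}. if q = p then real (incidence N T (i mod int N)) * lam p else 0)"
    unfolding quiddity_def by (intro sum.cong) auto
  also have "\<dots> = real (incidence N T (i mod int N)) * lam p" using assms(2,3) by simp
  finally show ?thesis .
qed

section \<open>Balance lines\<close>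

text \<open>Lines of slope \<open>1/m\<close> are the level sets of \<open>m y - x\<close>.\<close>
definition level :: "nat \<Rightarrow> bool list \<Rightarrow> nat \<Rightarrow> int" where
  "level m D k = int m * yc D k - xc D k"

definition bal_candidate :: "nat \<Rightarrow> bool list \<Rightarrow> nat \<Rightarrow> nat \<Rightarrow> bool" where
  "bal_candidate m D s k \<longleftrightarrow>
     s < k \<and> k \<le> length D \<and> \<not> corner D k \<and> level m D k = level m D s"

definition bal_end :: "nat \<Rightarrow> bool list \<Rightarrow> nat \<Rightarrow> int" where
  "bal_end m D s = xc D (bal_hit m D s) + 1"

lemma bal_hit_eq_Least: "bal_hit m D s = (LEAST k. bal_candidate m D s k)"
  unfolding bal_hit_def bal_candidate_def level_def
  by (rule arg_cong[where f = Least]) (auto simp: algebra_simps fun_eq_iff)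

lemma bal_hit_le: "bal_candidate m D s k \<Longrightarrow> bal_hit m D s \<le> k"
  unfolding bal_hit_eq_Least by (rule Least_le)

lemma bal_hit_eqI:
  "bal_candidate m D s k \<Longrightarrow> (\<And>y. y < k \<Longrightarrow> \<not> bal_candidate m D s y)
     \<Longrightarrow> bal_hit m D s = k"
  unfolding bal_hit_eq_Least by (rule Least_equality) (auto simp: not_less[symmetric])

lemma bal_label_eq: "bal_label m D s = (xc D s, bal_end m D s)"
  by (simp add: bal_label_def bal_end_def)

lemma bal_D_eq: "bal_D m D v = card {s \<in> bal_steps D. bal_end m D s = v}"
  unfolding bal_D_def bal_end_def by (metis add_diff_cancel_right' diff_add_cancel)

lemma xc_append_le: "k \<le> length P \<Longrightarrow> xc (P @ Q) k = xc P k"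
  by (simp add: xc_def)

lemma yc_append_le: "k \<le> length P \<Longrightarrow> yc (P @ Q) k = yc P k"
  by (simp add: yc_def)

lemma xc_append_ge: "length P \<le> k \<Longrightarrow> xc (P @ Q) k = xc P (length P) + xc Q (k - length P)"
  by (simp add: xc_def)

lemma yc_append_ge: "length P \<le> k \<Longrightarrow> yc (P @ Q) k = yc P (length P) + yc Q (k - length P)"
  by (simp add: yc_def)

lemma xc_replicate_False [simp]: "xc (replicate n False) k = int (min k n)"
  by (simp add: xc_def)

lemma yc_replicate_False [simp]: "yc (replicate n False) k = 0"
  by (simp add: yc_def)

lemma xc_up_rights [simp]: "xc (True # replicate n False) k = int (min (k - 1) n)"
  by (cases k) (simp_all add: xc_def)

lemma yc_up_rights [simp]: "yc (True # replicate n False) k = (if k = 0 then 0 else 1)"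
  by (cases k) (simp_all add: yc_def)

lemma xc_length: "xc D (length D) = int (length (filter Not D))"
  by (simp add: xc_def)

lemma yc_length: "yc D (length D) = int (length (filter id D))"
  by (simp add: yc_def)

lemma xc_mono:
  assumes "i \<le> j" shows "xc D i \<le> xc D j"
proof -
  from assms have "take j D = take i D @ take (j - i) (drop i D)"
    by (metis le_add_diff_inverse take_add)
  then show ?thesis unfolding xc_def by simp
qed

lemma xc_le_xc_length: "xc P k \<le> xc P (length P)"
proof (cases "k \<le> length P")
  case True
  then show ?thesis by (rule xc_mono)
next
  case False
  then show ?thesis by (simp add: xc_def)
qed

lemma filter_id_eq_Nil_iff: "filter id P = [] \<longleftrightarrow> True \<notin> set P"
  by (induction P) auto

lemma xc_Suc: "k < length D \<Longrightarrow> xc D (Suc k) = xc D k + (if D ! k then 0 else 1)"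
  by (simp add: xc_def take_Suc_conv_app_nth)

lemma yc_Suc: "k < length D \<Longrightarrow> yc D (Suc k) = yc D k + (if D ! k then 1 else 0)"
  by (simp add: yc_def take_Suc_conv_app_nth)

lemma level_Suc:
  "k < length D \<Longrightarrow> level m D (Suc k) = level m D k + (if D ! k then int m else -1)"
  by (simp add: level_def xc_Suc yc_Suc algebra_simps)

lemma level_nonneg: "dyck_path m l D \<Longrightarrow> k \<le> length D \<Longrightarrow> 0 \<le> level m D k"
  by (simp add: dyck_path_def level_def)

lemma level_length: "dyck_path m l D \<Longrightarrow> level m D (length D) = 0"
  by (simp add: dyck_path_def level_def xc_length yc_length)

text \<open>The first point after an up step at \<open>t\<close> that lies below its balance line is preceded
  by a point of that line reached and left by right steps, i.e. by a non-corner.\<close>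
lemma bal_candidate_before_descent:
  assumes "1 \<le> m" "t < length D" "D ! t"
    and "t < j" "j \<le> length D" "level m D j < level m D t"
  shows "\<exists>k<j. bal_candidate m D t k"
proof -
  define below where "below j \<longleftrightarrow> t < j \<and> j \<le> length D \<and> level m D j < level m D t" for j
  define j0 where "j0 = (LEAST j. below j)"
  have j0: "below j0" "j0 \<le> j"
    using assms(4-6) LeastI[of below j] Least_le[of below j] by (auto simp: j0_def below_def)
  have above: "level m D t \<le> level m D i" if "t < i" "i < j0" for i
    using that j0(1) not_less_Least[of i below] by (auto simp: j0_def below_def)
  have level_t_Suc: "level m D (Suc t) = level m D t + int m"
    using level_Suc[OF assms(2)] assms(3) by simp
  with j0(1) have "j0 \<noteq> Suc t" by (auto simp: below_def)
  with j0(1) have "Suc t < j0" by (auto simp: below_def)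
  define k where "k = j0 - 1"
  have k: "j0 = Suc k" "t < k" "k < length D"
    using \<open>Suc t < j0\<close> j0(1) by (auto simp: k_def below_def)
  have "level m D t \<le> level m D k" using above k by simp
  moreover have "level m D j0 = level m D k + (if D ! k then int m else -1)"
    using level_Suc[OF k(3)] k(1) by simp
  ultimately have right_k: "\<not> D ! k" and level_k: "level m D k = level m D t"
    using j0(1) by (auto simp: below_def split: if_splits)
  have "k \<noteq> Suc t" using level_k level_t_Suc assms(1) by auto
  with k(2) have "Suc t < k" by simp
  then have "level m D t \<le> level m D (k - 1)" using above k by simp
  moreover have "level m D k = level m D (k - 1) + (if D ! (k - 1) then int m else -1)"
    using level_Suc[of "k - 1" D m] \<open>Suc t < k\<close> k(3) by simp
  ultimately have "\<not> D ! (k - 1)" using level_k assms(1) by (auto split: if_splits)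
  with right_k have "bal_candidate m D t k"
    using k level_k by (auto simp: bal_candidate_def corner_def)
  then show ?thesis using j0(2) k(1) by (intro exI[of _ k]) auto
qed

context
  fixes m l :: nat and D :: "bool list" and t :: nat
  assumes m_pos: "1 \<le> m" and dyck: "dyck_path m l D" and up_t: "t < length D" "D ! t"
begin

lemma bal_candidate_bal_hit: "bal_candidate m D t (bal_hit m D t)"
proof -
  have "\<exists>k. bal_candidate m D t k"
  proof (cases "\<exists>j. t < j \<and> j \<le> length D \<and> level m D j < level m D t")
    case True
    then show ?thesis using bal_candidate_before_descent[OF m_pos up_t] by blast
  next
    case False
    then have "level m D t \<le> level m D (length D)" using up_t by force
    with level_nonneg[OF dyck, of t] level_length[OF dyck] up_t
    have "bal_candidate m D t (length D)" by (auto simp: bal_candidate_def corner_def)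
    then show ?thesis ..
  qed
  then show ?thesis unfolding bal_hit_eq_Least by (rule LeastI_ex)
qed

lemma bal_hit_after_right_step: "\<not> D ! (bal_hit m D t - 1)"
proof
  define k where "k = bal_hit m D t"
  have k: "t < k" "k \<le> length D" "level m D k = level m D t"
    using bal_candidate_bal_hit by (auto simp: k_def bal_candidate_def)
  have "k \<noteq> Suc t" using k level_Suc[OF up_t(1), of m] up_t(2) m_pos by auto
  then have k1: "t < k - 1" "Suc (k - 1) = k" "k - 1 < length D" using k by auto
  assume "D ! (bal_hit m D t - 1)"
  then have "level m D (k - 1) < level m D t"
    using level_Suc[OF k1(3), of m] k1 k m_pos by (simp add: k_def)
  then obtain k' where "k' < k - 1" "bal_candidate m D t k'"
    using bal_candidate_before_descent[OF m_pos up_t k1(1)] k1 by auto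
  then show False using bal_hit_le k_def by fastforce
qed

end

lemma nth_append_rights:
  "k < length P + r \<Longrightarrow> (P @ replicate r False) ! k \<longleftrightarrow> k < length P \<and> P ! k"
  by (auto simp: nth_append)

lemma nth_append_up_rights:
  "k < length P + Suc n \<Longrightarrow>
     (P @ True # replicate n False) ! k \<longleftrightarrow> k = length P \<or> k < length P \<and> P ! k"
  by (auto simp: nth_append nth_Cons')

lemma first_up_append_rights: "first_up (P @ replicate r False) = first_up P"
  unfolding first_up_def
  by (rule arg_cong[where f = Least]) (auto simp: nth_append_rights fun_eq_iff)

lemma first_up_is_up_step: "True \<in> set P \<Longrightarrow> first_up P < length P \<and> P ! first_up P"
  unfolding first_up_def by (rule LeastI_ex) (metis in_set_conv_nth)

lemma first_up_append:
  assumes "True \<in> set P" shows "first_up (P @ Q) = first_up P"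
  unfolding first_up_def[of "P @ Q"]
proof (rule Least_equality)
  show "first_up P < length (P @ Q) \<and> (P @ Q) ! first_up P"
    using first_up_is_up_step[OF assms] by (simp add: nth_append)
  fix k assume k: "k < length (P @ Q) \<and> (P @ Q) ! k"
  show "first_up P \<le> k"
  proof (cases "k < length P")
    case True
    with k show ?thesis unfolding first_up_def by (auto simp: nth_append intro: Least_le)
  next
    case False
    with first_up_is_up_step[OF assms] show ?thesis by simp
  qed
qed

lemma finite_bal_steps: "finite (bal_steps P)"
  by (rule finite_subset[of _ "{..<length P}"]) (auto simp: bal_steps_def)

lemma bal_steps_append_rights: "bal_steps (P @ replicate r False) = bal_steps P"
  by (auto simp: bal_steps_def first_up_append_rights nth_append_rights)

lemma bal_steps_append_up_rights:
  assumes "True \<in> set P"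
  shows "bal_steps (P @ True # replicate n False) = insert (length P) (bal_steps P)"
  using first_up_append[OF assms] first_up_is_up_step[OF assms]
  by (auto simp: bal_steps_def nth_append_up_rights)

lemma up_D_append_rights: "up_D (P @ replicate r False) v = up_D P v"
proof -
  have "(k < length (P @ replicate r False) \<and> (P @ replicate r False) ! k
          \<and> xc (P @ replicate r False) k = v \<and> yc (P @ replicate r False) k > 0)
    \<longleftrightarrow> (k < length P \<and> P ! k \<and> xc P k = v \<and> yc P k > 0)" for k
    by (cases "k < length P") (auto simp: nth_append xc_append_le yc_append_le)
  then show ?thesis by (simp add: up_D_def)
qed

lemma up_D_append_up_rights:
  assumes "True \<in> set P"
  shows "up_D (P @ True # replicate n False) v
           = up_D P v + (if v = xc P (length P) then 1 else 0)"
proof -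
  let ?ups = "\<lambda>D. {k. k < length D \<and> D ! k \<and> xc D k = v \<and> yc D k > 0}"
  have "filter id P \<noteq> []" using assms by (simp add: filter_id_eq_Nil_iff)
  then have "yc P (length P) > 0" by (simp add: yc_length)
  have "?ups (P @ True # replicate n False)
      = (if v = xc P (length P) then insert (length P) (?ups P) else ?ups P)"
  proof (rule set_eqI)
    fix k
    consider (before) "k < length P" | (last) "k = length P" | (after) "length P < k"
      by linarith
    then show "k \<in> ?ups (P @ True # replicate n False)
      \<longleftrightarrow> k \<in> (if v = xc P (length P) then insert (length P) (?ups P) else ?ups P)"
    proof cases
      case before
      then show ?thesis by (simp add: nth_append xc_append_le yc_append_le)
    next
      case last
      with \<open>yc P (length P) > 0\<close> show ?thesis
        by (simp add: nth_append xc_append_le yc_append_le)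
    next
      case after
      then have
        "\<not> (k < length (P @ True # replicate n False) \<and> (P @ True # replicate n False) ! k)"
        by (simp add: nth_append_up_rights)
      with after show ?thesis by auto
    qed
  qed
  moreover have "finite (?ups P)" by simp
  ultimately show ?thesis by (simp add: up_D_def)
qed

lemma up_D_beyond:
  assumes "xc P (length P) < v" shows "up_D P v = 0"
proof -
  have "xc P k \<noteq> v" for k
    using xc_le_xc_length[of P k] assms by linarith
  then show ?thesis by (simp add: up_D_def)
qed

section \<open>Removing the last up step\<close>

locale last_up_step =
  fixes m l r :: nat and P :: "bool list"
  assumes m_pos: "1 \<le> m" and l_pos: "1 \<le> l"
    and dyck_pruned: "dyck_path m l (P @ replicate r False)"
begin

abbreviation D :: "bool list" where "D \<equiv> P @ True # replicate (m + r) False"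
abbreviation D' :: "bool list" where "D' \<equiv> P @ replicate r False"
abbreviation X :: int where "X \<equiv> xc P (length P)"

lemma up_in_P: "True \<in> set P"
proof -
  have "filter id P \<noteq> []" using dyck_pruned l_pos by (auto simp: dyck_path_def)
  then show ?thesis by (simp add: filter_id_eq_Nil_iff)
qed

lemma length_P_pos: "0 < length P"
  using up_in_P by (cases P) auto

lemma X_plus_r: "X + int r = int (m * l)"
  using dyck_pruned by (simp add: dyck_path_def xc_length flip: of_nat_add)

lemma yc_P: "yc P (length P) = int l"
  using dyck_pruned by (simp add: dyck_path_def yc_length)

lemma level_P: "level m P (length P) = int r"
  using X_plus_r yc_P by (simp add: level_def)

lemma X_nonneg: "0 \<le> X"
  by (simp add: xc_def)

lemma xc_D:
  "xc D k = (if k \<le> length P then xc P k else X + int (min (k - length P - 1) (m + r)))"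
  by (simp add: xc_append_le xc_append_ge)

lemma xc_D': "xc D' k = (if k \<le> length P then xc P k else X + int (min (k - length P) r))"
  by (simp add: xc_append_le xc_append_ge)

lemma level_D:
  "level m D k = (if k \<le> length P then level m P k
                  else int r + int m - int (min (k - length P - 1) (m + r)))"
proof (cases "k \<le> length P")
  case True
  then show ?thesis by (simp add: level_def xc_append_le yc_append_le)
next
  case False
  then have "yc D k = int l + 1" using yc_P by (simp add: yc_append_ge)
  with False X_plus_r show ?thesis by (simp add: level_def xc_D algebra_simps)
qed

lemma level_D':
  "level m D' k = (if k \<le> length P then level m P k else int r - int (min (k - length P) r))"
proof (cases "k \<le> length P")
  case True
  then show ?thesis by (simp add: level_def xc_append_le yc_append_le)
next
  case False
  then have "yc D' k = int l" using yc_P by (simp add: yc_append_ge)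
  with False X_plus_r show ?thesis by (simp add: level_def xc_D' algebra_simps)
qed

lemma not_corner_D_beyond: "Suc (length P) < k \<Longrightarrow> \<not> corner D k"
  by (auto simp: corner_def nth_append nth_Cons')

lemma corner_D_length_P: "\<not> P ! (length P - 1) \<Longrightarrow> corner D (length P)"
  using length_P_pos by (simp add: corner_def nth_append)

lemma bal_candidate_D_iff:
  assumes "t < length P" "k < length P"
  shows "bal_candidate m D t k \<longleftrightarrow> bal_candidate m D' t k"
proof -
  have "D ! i = P ! i" "D' ! i = P ! i" if "i < length P" for i
    using that by (simp_all add: nth_append)
  with assms have "corner D k \<longleftrightarrow> corner D' k" by (simp add: corner_def)
  with assms show ?thesis by (simp add: bal_candidate_def level_D level_D')
qed

lemma up_step_D':
  assumes "t \<in> bal_steps P" shows "t < length D'" "D' ! t"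
  using assms by (auto simp: bal_steps_def nth_append)

lemma bal_hit_D_last: "bal_hit m D (length P) = length P + 1 + m"
proof (rule bal_hit_eqI)
  show "bal_candidate m D (length P) (length P + 1 + m)"
    using m_pos level_P not_corner_D_beyond[of "length P + 1 + m"]
    by (simp add: bal_candidate_def level_D)
  fix y assume "y < length P + 1 + m"
  with level_P show "\<not> bal_candidate m D (length P) y" by (auto simp: bal_candidate_def level_D)
qed

lemma bal_hit_D_before:
  assumes t: "t \<in> bal_steps P" and before: "bal_hit m D' t < length P"
  shows "bal_hit m D t = bal_hit m D' t"
proof (rule bal_hit_eqI)
  have "t < length P" using t by (simp add: bal_steps_def)
  note iff = bal_candidate_D_iff[OF this]
  show "bal_candidate m D t (bal_hit m D' t)"
    using iff[OF before] bal_candidate_bal_hit[OF m_pos dyck_pruned up_step_D'[OF t]] by simp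
  fix y assume "y < bal_hit m D' t"
  with iff[of y] before bal_hit_le[of m D' t y] show "\<not> bal_candidate m D t y" by auto
qed

lemma bal_hit_D'_beyond:
  assumes t: "t \<in> bal_steps P" and beyond: "length P \<le> bal_hit m D' t"
  shows "bal_hit m D' t \<le> length P + r"
    and "level m P t = int r - int (bal_hit m D' t - length P)"
proof -
  have cand: "bal_candidate m D' t (bal_hit m D' t)"
    by (rule bal_candidate_bal_hit[OF m_pos dyck_pruned up_step_D'[OF t]])
  then show "bal_hit m D' t \<le> length P + r" by (simp add: bal_candidate_def)
  with cand beyond t level_P show "level m P t = int r - int (bal_hit m D' t - length P)"
    by (cases "bal_hit m D' t = length P") (auto simp: bal_candidate_def bal_steps_def level_D')
qed

lemma bal_hit_D_beyond:
  assumes t: "t \<in> bal_steps P" and beyond: "length P \<le> bal_hit m D' t"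
  shows "bal_hit m D t = bal_hit m D' t + 1 + m"
proof -
  define k where "k = bal_hit m D' t"
  define j where "j = k - length P"
  have t_lt: "t < length P" using t by (simp add: bal_steps_def)
  have k_eq: "k = length P + j" and "j \<le> r"
    using beyond bal_hit_D'_beyond(1)[OF t beyond] by (simp_all add: j_def k_def)
  have level_t: "level m D t = int r - int j"
    using bal_hit_D'_beyond(2)[OF t beyond] t_lt by (simp add: level_D j_def k_def)
  show ?thesis
    unfolding k_def[symmetric]
  proof (rule bal_hit_eqI)
    show "bal_candidate m D t (k + 1 + m)"
      using m_pos level_t \<open>j \<le> r\<close> t_lt not_corner_D_beyond[of "k + 1 + m"]
      by (simp add: bal_candidate_def level_D k_eq)
    fix y assume y: "y < k + 1 + m"
    show "\<not> bal_candidate m D t y"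
    proof
      assume cand_y: "bal_candidate m D t y"
      consider (before) "y < length P" | (at_end) "y = length P" | (after) "length P < y"
        by linarith
      then show False
      proof cases
        case before
        with cand_y bal_candidate_D_iff[OF t_lt] bal_hit_le[of m D' t y] beyond show False
          by (auto simp: k_def)
      next
        case at_end
        with cand_y level_t level_P t_lt have "j = 0" by (simp add: bal_candidate_def level_D)
        \<comment> \<open>so \<open>D'\<close> hits its line at the end of \<open>P\<close>, reached by a right step: a corner of \<open>D\<close>\<close>
        then have "\<not> P ! (length P - 1)"
          using bal_hit_after_right_step[OF m_pos dyck_pruned up_step_D'[OF t]] length_P_pos
          by (simp add: k_def[symmetric] k_eq nth_append)
        with cand_y at_end corner_D_length_P show False by (simp add: bal_candidate_def)
      next
        case after
        have "min (y - Suc (length P)) (m + r) = y - Suc (length P)"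
          using y k_eq \<open>j \<le> r\<close> by simp
        with cand_y y level_t k_eq after show False by (simp add: bal_candidate_def level_D)
      qed
    qed
  qed
qed

lemma bal_end_D_last: "bal_end m D (length P) = X + int m + 1"
  by (simp add: bal_end_def bal_hit_D_last xc_D)

lemma bal_end_D:
  assumes "t \<in> bal_steps P"
  shows "bal_end m D t = shift_after X m (bal_end m D' t)"
proof (cases "bal_hit m D' t < length P")
  case True
  define k where "k = bal_hit m D' t"
  have "k < length D'" "\<not> D' ! (k - 1)" "\<not> corner D' k" "0 < k"
    using True bal_candidate_bal_hit[OF m_pos dyck_pruned up_step_D'[OF assms]]
      bal_hit_after_right_step[OF m_pos dyck_pruned up_step_D'[OF assms]]
    by (auto simp: k_def bal_candidate_def)
  then have "\<not> P ! k" using True by (auto simp: corner_def nth_append k_def)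
  then have "xc P k + 1 = xc P (Suc k)" using True by (simp add: xc_Suc k_def)
  also have "\<dots> \<le> X" by (rule xc_le_xc_length)
  finally show ?thesis
    using True
    by (simp add: bal_end_def bal_hit_D_before[OF assms] xc_D xc_D' shift_after_def k_def)
next
  case False
  moreover have "bal_hit m D' t \<le> length P + r"
    using bal_candidate_bal_hit[OF m_pos dyck_pruned up_step_D'[OF assms]]
    by (simp add: bal_candidate_def)
  ultimately show ?thesis
    using m_pos by (simp add: bal_end_def bal_hit_D_beyond[OF assms] xc_D xc_D' shift_after_def)
qed

lemma rtn_D: "rtn m D = ear_extend X m (rtn m D')"
proof -
  have "bal_label m D t = map_prod (shift_after X m) (shift_after X m) (bal_label m D' t)"
    if "t \<in> bal_steps P" for t
  proof -
    have "t < length P" using that by (simp add: bal_steps_def)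
    moreover have "xc P t \<le> X" by (rule xc_le_xc_length)
    ultimately show ?thesis
      by (simp add: bal_label_eq bal_end_D[OF that] xc_D xc_D' shift_after_def)
  qed
  moreover have "bal_label m D (length P) = (X, X + int m + 1)"
    by (simp add: bal_label_eq bal_end_D_last xc_D)
  ultimately show ?thesis
    by (simp add: rtn_def ear_extend_def bal_steps_append_up_rights[OF up_in_P]
        bal_steps_append_rights image_image cong: image_cong)
qed

lemma bal_D_shift:
  "bal_D m D (shift_after X m w) = bal_D m D' w + (if w = X + 1 then 1 else 0)"
proof -
  have "X + int m + 1 = shift_after X m (X + 1)"
    by (simp add: shift_after_def)
  with bal_end_D bal_end_D_last
  have "{s \<in> insert (length P) (bal_steps P). bal_end m D s = shift_after X m w}
      = (if w = X + 1 then insert (length P) else id) {t \<in> bal_steps P. bal_end m D' t = w}"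
    by auto
  moreover have "length P \<notin> bal_steps P" by (simp add: bal_steps_def)
  ultimately show ?thesis
    by (simp add: bal_D_eq bal_steps_append_up_rights[OF up_in_P] bal_steps_append_rights
        finite_bal_steps)
qed

lemma bal_D_interior:
  assumes "X < v" "v < X + int m + 1"
  shows "bal_D m D v = 0"
proof -
  have "bal_end m D s \<noteq> v" if "s \<in> insert (length P) (bal_steps P)" for s
    using that assms shift_after_notin_ear_interior[of X m] bal_end_D bal_end_D_last
    by (metis insert_iff less_irrefl not_le)
  then have "{s \<in> insert (length P) (bal_steps P). bal_end m D s = v} = {}" by blast
  then show ?thesis
    unfolding bal_D_eq bal_steps_append_up_rights[OF up_in_P] by (metis card.empty)
qed

lemma up_D_shift: "up_D D (shift_after X m w) = up_D D' w + (if w = X then 1 else 0)"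
proof (cases "w \<le> X")
  case True
  then show ?thesis
    by (simp add: shift_after_def up_D_append_up_rights[OF up_in_P] up_D_append_rights)
next
  case False
  then show ?thesis
    by (simp add: shift_after_def up_D_append_up_rights[OF up_in_P] up_D_append_rights up_D_beyond)
qed

lemma up_D_interior: "X < v \<Longrightarrow> up_D D v = 0"
  by (simp add: up_D_append_up_rights[OF up_in_P] up_D_beyond)

lemma X_bounds: "0 \<le> X" "X + 1 < int (m * l + 2)"
  using X_nonneg X_plus_r by simp_all

lemma card_cells_rtn_D:
  assumes "\<forall>C\<in>cells (m * l + 2) (rtn m D'). card C = m + 2"
  shows "\<forall>C\<in>cells (m * Suc l + 2) (rtn m D). card C = m + 2"
  using card_cells_ear_extend[OF m_pos X_bounds assms]
  by (simp add: rtn_D add.commute add.left_commute)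

lemma incidence_rtn_D:
  assumes cells: "\<forall>C\<in>cells (m * l + 2) (rtn m D'). card C = m + 2"
    and incidence: "\<And>w. 0 \<le> w \<Longrightarrow> w \<le> int (m * l + 1) \<Longrightarrow>
        incidence (m * l + 2) (rtn m D') w = up_D D' w + bal_D m D' w + 1"
    and v: "0 \<le> v" "v \<le> int (m * Suc l + 1)"
  shows "incidence (m * Suc l + 2) (rtn m D) v = up_D D v + bal_D m D v + 1"
proof -
  have N: "m * Suc l + 2 = (m * l + 2) + m" by simp
  have big: "\<forall>C\<in>cells (m * l + 2) (rtn m D'). 3 \<le> card C" using cells m_pos by simp
  note ear = m_pos X_bounds big
  show ?thesis
  proof (cases "X < v \<and> v < X + int m + 1")
    case True
    then show ?thesis
      unfolding N rtn_D using incidence_ear_extend_interior[OF ear] up_D_interior bal_D_interior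
      by simp
  next
    case False
    define w where "w = (if v \<le> X then v else v - int m)"
    have v_eq: "v = shift_after X m w" and w: "0 \<le> w" "w \<le> int (m * l + 1)"
      using False v X_plus_r X_nonneg m_pos by (auto simp: w_def shift_after_def)
    show ?thesis
      unfolding N rtn_D v_eq
      using incidence_ear_extend_shift[OF ear] incidence[OF w] up_D_shift bal_D_shift
      by simp
  qed
qed

end

lemma dyck_path_Suc_decompose:
  assumes "dyck_path m (Suc l) D"
  obtains P r
  where "D = P @ True # replicate (m + r) False" "dyck_path m l (P @ replicate r False)"
proof -
  from assms have "filter id D \<noteq> []" by (auto simp: dyck_path_def)
  then have "True \<in> set D" by (simp add: filter_id_eq_Nil_iff)
  then obtain P Z where D: "D = P @ True # Z" and "True \<notin> set Z"
    by (metis split_list_last)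
  then have Z_False: "\<forall>z\<in>set Z. \<not> z" by auto
  then have Z: "Z = replicate (length Z) False" by (simp add: replicate_length_same)
  from Z_False have "filter id Z = []" "filter Not Z = Z" by simp_all
  define x where "x = length (filter Not P)"
  have ups_P: "length (filter id P) = l" and x_Z: "x + length Z = m * Suc l"
    using assms \<open>filter id Z = []\<close> \<open>filter Not Z = Z\<close>
    by (simp_all add: dyck_path_def D x_def)
  have "xc D (length P) \<le> int m * yc D (length P)"
    using assms by (simp add: dyck_path_def D)
  then have "x \<le> m * l"
    using ups_P
    by (simp add: D xc_append_le yc_append_le xc_length yc_length x_def flip: of_nat_mult)
  define r where "r = length Z - m"
  with x_Z \<open>x \<le> m * l\<close> have r: "length Z = m + r" "x + r = m * l" by simp_all
  show thesis
  proof
    show "D = P @ True # replicate (m + r) False" using D Z r(1) by metis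
    have "xc (P @ replicate r False) k \<le> int m * yc (P @ replicate r False) k"
      if "k \<le> length P + r" for k
    proof (cases "k \<le> length P")
      case True
      moreover have "xc D k \<le> int m * yc D k" using assms True by (simp add: dyck_path_def D)
      ultimately show ?thesis by (simp add: D xc_append_le yc_append_le)
    next
      case False
      with r(2) ups_P show ?thesis
        by (simp add: xc_append_ge yc_append_ge xc_length yc_length x_def
            flip: of_nat_add of_nat_mult)
    qed
    then show "dyck_path m l (P @ replicate r False)"
      using ups_P r(2) by (simp add: dyck_path_def x_def)
  qed
qed

lemma dyck_path_order_one:
  assumes "dyck_path m 1 D" shows "D = True # replicate m False"
proof -
  from assms have "dyck_path m (Suc 0) D" by simp
  then obtain P r where D: "D = P @ True # replicate (m + r) False"
    and "dyck_path m 0 (P @ replicate r False)"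
    by (rule dyck_path_Suc_decompose)
  then have "filter id P = []" "filter Not P = []" "r = 0" by (simp_all add: dyck_path_def)
  then have "P = []" "r = 0" by (cases P; auto split: if_splits)+
  with D show ?thesis by simp
qed

lemma rtn_single_up_step:
  shows "rtn m (True # replicate m False) = {}"
    and "up_D (True # replicate m False) v = 0"
    and "bal_D m (True # replicate m False) v = 0"
proof -
  have only_up: "k = 0" if "k < Suc m" "(True # replicate m False) ! k" for k
    using that by (cases k) auto
  have "first_up (True # replicate m False) = 0"
    unfolding first_up_def by (rule Least_equality) auto
  with only_up have "bal_steps (True # replicate m False) = {}"
    by (auto simp: bal_steps_def)
  then show "rtn m (True # replicate m False) = {}" "bal_D m (True # replicate m False) v = 0"
    by (simp_all add: rtn_def bal_D_def)
  from only_up show "up_D (True # replicate m False) v = 0"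
    by (auto simp: up_D_def)
qed

lemma rtn_cells_incidence:
  assumes "1 \<le> m" "1 \<le> l" "dyck_path m l D"
  shows "(\<forall>C\<in>cells (m * l + 2) (rtn m D). card C = m + 2)
    \<and> (\<forall>v. 0 \<le> v \<and> v \<le> int (m * l + 1) \<longrightarrow>
          incidence (m * l + 2) (rtn m D) v = up_D D v + bal_D m D v + 1)"
  using assms(2,3)
proof (induction l arbitrary: D rule: nat_induct_at_least)
  case base
  then have D: "D = True # replicate m False" by (rule dyck_path_order_one)
  have "{C \<in> cells (m * 1 + 2) {}. v \<in> C} = {{0..<int (m * 1 + 2)}}"
    if "0 \<le> v" "v \<le> int (m * 1 + 1)" for v
    using that by (auto simp: cells_empty)
  then show ?case by (simp add: D rtn_single_up_step cells_empty incidence_def)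
next
  case (Suc l)
  from Suc.prems obtain P r where D: "D = P @ True # replicate (m + r) False"
    and pruned: "dyck_path m l (P @ replicate r False)"
    by (rule dyck_path_Suc_decompose)
  interpret last_up_step m l r P
    using assms(1) Suc.hyps pruned by unfold_locales
  show ?case
    unfolding D using Suc.IH[OF pruned] card_cells_rtn_D incidence_rtn_D by blast
qed

theorem proposition5p7:
  fixes m l :: nat and D :: "bool list" and i :: int
  assumes "1 \<le> m" and "1 \<le> l" and "dyck_path m l D"
    and "0 \<le> i" and "i \<le> int (m * l + 1)"
  shows "frieze (m * l + 2) (rtn m D) (i - 1) (i + 1)
           = real (up_D D i + bal_D m D i + 1) * lam (m + 2)"
proof -
  note rtn = rtn_cells_incidence[OF assms(1-3)]
  have "m + 2 \<le> m * l + 2" using assms(2) by simp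
  then have "quiddity (m * l + 2) (rtn m D) i
      = real (incidence (m * l + 2) (rtn m D) i) * lam (m + 2)"
    using rtn assms(1,4,5) quiddity_uniform[of "m * l + 2" "rtn m D" "m + 2" i] by simp
  with rtn assms(4,5) show ?thesis by (simp add: frieze_quiddity)
qed

end
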